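(* Let $\beta\in\mathbb{Z}[\mathrm{i}]$ with $|\beta|>1$ and let $D\subset\mathbb{Z}[\mathrm{i}]$ be finite. Let $w_1,w_2,w_3\in D^*$ with $w_2$ non-empty, and suppose $[w_1]_\beta\,(1-\beta^{|w_2|})\neq[w_2]_\beta$. For $j\ge0$ put $u_j=[w_1w_2^jw_3]_\beta$, where $w_2^j$ denotes $w_2$ concatenated $j$ times. If there exist integers $k\ge0$ and $\ell\ge1$ such that $u_k,u_{k+\ell},u_{k+2\ell}$ lie on a common line in $\mathbb{C}$, then $\beta$ is a root of an integer, i.e. $\beta^N\in\mathbb{Z}$ for some integer $N\ge1$.
   Context: For a word $w=w_{n-1}\cdots w_0$ over $D$, $[w]_\beta=\sum_{j=0}^{n-1}w_j\beta^j$ ($w_0$ least significant) and $|w|=n$ is its length. *)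

theory Defs
  imports "HOL-Analysis.Analysis"
begin

definition gauss_int :: "complex \<Rightarrow> bool" where
  "gauss_int z \<longleftrightarrow> Re z \<in> \<int> \<and> Im z \<in> \<int>"

text \<open>A word w = w_{n-1} ... w_0 is the list [w_{n-1}, ..., w_0]; the last list
  element is the least significant digit.\<close>
fun word_val :: "complex \<Rightarrow> complex list \<Rightarrow> complex" where
  "word_val \<beta> [] = 0"
| "word_val \<beta> (x # xs) = x * \<beta> ^ length xs + word_val \<beta> xs"

definition word_pow :: "complex list \<Rightarrow> nat \<Rightarrow> complex list" where
  "word_pow w j = concat (replicate j w)"

end

theory Submission
  imports Defs
begin

text \<open>Write \<open>q = \<beta>^|w2|\<close>. Summing the geometric series for the pumped block gives
  \<open>(q - 1) u j = E q^j + F\<close> with \<open>E = \<beta>^|w3| ([w1] (q - 1) + [w2])\<close>, and the hypothesis on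
  \<open>w1, w2\<close> says exactly that \<open>E \<noteq> 0\<close>. Hence \<open>u (k + l) - u k\<close> is nonzero and
  \<open>u (k + 2l) - u (k + l)\<close> is \<open>q^l\<close> times it. Collinearity forces this ratio to be real, so
  \<open>\<beta>^(|w2| l)\<close> is a real Gaussian integer, i.e. an integer.\<close>

lemma word_val_append:
  "word_val b (xs @ ys) = word_val b xs * b ^ length ys + word_val b ys"
  by (induction xs) (auto simp: algebra_simps power_add)

lemma length_word_pow: "length (word_pow w j) = j * length w"
  by (induction j) (auto simp: word_pow_def)

lemma word_pow_Suc: "word_pow w (Suc j) = w @ word_pow w j"
  by (simp add: word_pow_def)

lemma word_val_word_pow:
  "word_val b (word_pow w j) * (b ^ length w - 1) = word_val b w * ((b ^ length w) ^ j - 1)"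
proof (induction j)
  case 0
  then show ?case by (simp add: word_pow_def)
next
  case (Suc j)
  have "word_val b (word_pow w (Suc j))
      = word_val b w * (b ^ length w) ^ j + word_val b (word_pow w j)"
    by (simp add: word_pow_Suc word_val_append length_word_pow power_mult[symmetric] mult.commute)
  then show ?case
    using Suc by (simp add: algebra_simps)
qed

lemma word_val_pumped:
  fixes b :: complex and w1 w2 w3 :: "complex list"
  defines "q \<equiv> b ^ length w2"
  shows "(q - 1) * word_val b (w1 @ word_pow w2 j @ w3)
    = b ^ length w3 * (word_val b w1 * (q - 1) + word_val b w2) * q ^ j
      + ((q - 1) * word_val b w3 - b ^ length w3 * word_val b w2)"
proof -
  have "word_val b (w1 @ word_pow w2 j @ w3)
      = (word_val b w1 * q ^ j + word_val b (word_pow w2 j)) * b ^ length w3 + word_val b w3"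
    by (simp add: word_val_append length_word_pow q_def power_add power_mult[symmetric]
        algebra_simps)
  then have "(q - 1) * word_val b (w1 @ word_pow w2 j @ w3)
      = (word_val b w1 * q ^ j * (q - 1) + word_val b (word_pow w2 j) * (q - 1)) * b ^ length w3
        + (q - 1) * word_val b w3"
    by (simp add: algebra_simps)
  also have "\<dots> = (word_val b w1 * q ^ j * (q - 1) + word_val b w2 * (q ^ j - 1)) * b ^ length w3
        + (q - 1) * word_val b w3"
    using word_val_word_pow[of b w2 j] by (simp add: q_def)
  finally show ?thesis
    by (simp add: algebra_simps)
qed

lemma word_val_pumped_diff:
  fixes b :: complex and w1 w2 w3 :: "complex list"
  defines "q \<equiv> b ^ length w2"
  shows "(q - 1) * (word_val b (w1 @ word_pow w2 (j + i) @ w3) - word_val b (w1 @ word_pow w2 j @ w3))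
    = b ^ length w3 * (word_val b w1 * (q - 1) + word_val b w2) * q ^ j * (q ^ i - 1)"
proof -
  have "(q - 1) * (word_val b (w1 @ word_pow w2 (j + i) @ w3) - word_val b (w1 @ word_pow w2 j @ w3))
      = (q - 1) * word_val b (w1 @ word_pow w2 (j + i) @ w3)
        - (q - 1) * word_val b (w1 @ word_pow w2 j @ w3)"
    by (rule right_diff_distrib)
  also have "\<dots> = b ^ length w3 * (word_val b w1 * (q - 1) + word_val b w2) * q ^ j * (q ^ i - 1)"
    unfolding q_def word_val_pumped by (simp add: power_add algebra_simps)
  finally show ?thesis .
qed

lemma word_val_pumped_diff_shift:
  fixes b :: complex and w1 w2 w3 :: "complex list"
  assumes "b ^ length w2 \<noteq> 1"
  shows "word_val b (w1 @ word_pow w2 (j + i + l) @ w3) - word_val b (w1 @ word_pow w2 (j + i) @ w3)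
    = (b ^ length w2) ^ i
      * (word_val b (w1 @ word_pow w2 (j + l) @ w3) - word_val b (w1 @ word_pow w2 j @ w3))"
proof -
  let ?q = "b ^ length w2"
  have "(?q - 1) * (word_val b (w1 @ word_pow w2 (j + i + l) @ w3)
        - word_val b (w1 @ word_pow w2 (j + i) @ w3))
      = (?q - 1) * (?q ^ i * (word_val b (w1 @ word_pow w2 (j + l) @ w3)
        - word_val b (w1 @ word_pow w2 j @ w3)))"
    unfolding mult.left_commute[of "?q - 1" "?q ^ i"] word_val_pumped_diff
    by (simp add: power_add)
  then show ?thesis
    using assms by simp
qed

lemma word_val_pumped_diff_neq_0:
  fixes b :: complex and w1 w2 w3 :: "complex list"
  assumes "b \<noteq> 0" and "(b ^ length w2) ^ l \<noteq> 1"
    and "word_val b w1 * (1 - b ^ length w2) \<noteq> word_val b w2"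
  shows "word_val b (w1 @ word_pow w2 (j + l) @ w3) \<noteq> word_val b (w1 @ word_pow w2 j @ w3)"
proof
  let ?q = "b ^ length w2"
  assume "word_val b (w1 @ word_pow w2 (j + l) @ w3) = word_val b (w1 @ word_pow w2 j @ w3)"
  then have "b ^ length w3 * (word_val b w1 * (?q - 1) + word_val b w2) * ?q ^ j * (?q ^ l - 1) = 0"
    using word_val_pumped_diff[of b w2 w1 j l w3] by simp
  then have "word_val b w1 * (?q - 1) + word_val b w2 = 0"
    using assms(1,2) by simp
  then have "word_val b w1 * (1 - ?q) = word_val b w2"
    by (simp add: algebra_simps)
  with assms(3) show False ..
qed

lemma collinear_3_diff_ratio_Reals:
  fixes a b c :: complex
  assumes "collinear {a, b, c}"
  shows "(c - b) / (b - a) \<in> \<real>"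
proof -
  have "(c - b) / (a - b) \<in> \<real>"
    using assms by (simp add: collinear_3 collinear_iff_Reals)
  then have "- ((c - b) / (a - b)) \<in> \<real>"
    by (rule Reals_minus)
  then show ?thesis
    by (simp add: minus_divide_right)
qed

lemma power_neq_one_if_norm_gt_one:
  fixes z :: "'a :: real_normed_div_algebra"
  assumes "norm z > 1" and "n \<ge> 1"
  shows "z ^ n \<noteq> 1"
proof -
  have "norm (z ^ n) > 1"
    using assms by (simp add: norm_power)
  then show ?thesis by auto
qed

lemma gauss_int_power: "gauss_int z \<Longrightarrow> gauss_int (z ^ n)"
proof (induction n)
  case (Suc n)
  then show ?case by (auto simp: gauss_int_def)
qed (simp add: gauss_int_def)

lemma gauss_int_Reals_imp_Ints: "gauss_int z \<Longrightarrow> z \<in> \<real> \<Longrightarrow> z \<in> \<int>"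
  by (auto simp: gauss_int_def complex_is_Int_iff complex_is_Real_iff elim!: Ints_cases)

theorem lemma3p3:
  fixes \<beta> :: complex and D :: "complex set" and w1 w2 w3 :: "complex list"
    and k l :: nat
  assumes "gauss_int \<beta>" and "cmod \<beta> > 1"
    and "finite D" and "\<forall>d\<in>D. gauss_int d"
    and "set w1 \<subseteq> D" and "set w2 \<subseteq> D" and "set w3 \<subseteq> D"
    and "w2 \<noteq> []"
    and "word_val \<beta> w1 * (1 - \<beta> ^ length w2) \<noteq> word_val \<beta> w2"
    and "l \<ge> 1"
    and "collinear {word_val \<beta> (w1 @ word_pow w2 k @ w3),
                    word_val \<beta> (w1 @ word_pow w2 (k + l) @ w3),
                    word_val \<beta> (w1 @ word_pow w2 (k + 2 * l) @ w3)}"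
  shows "\<exists>N::nat. N \<ge> 1 \<and> \<beta> ^ N \<in> \<int>"
proof -
  define n where "n = length w2"
  define u where "u j = word_val \<beta> (w1 @ word_pow w2 j @ w3)" for j
  have "n \<ge> 1" and "\<beta> \<noteq> 0"
    using assms(2,8) by (auto simp: n_def Suc_le_eq)
  have "\<beta> ^ n \<noteq> 1" and "(\<beta> ^ n) ^ l \<noteq> 1"
    using power_neq_one_if_norm_gt_one[OF assms(2)] \<open>n \<ge> 1\<close> \<open>l \<ge> 1\<close>
    by (auto simp flip: power_mult)
  then have "u (k + 2 * l) - u (k + l) = (\<beta> ^ n) ^ l * (u (k + l) - u k)"
    using word_val_pumped_diff_shift[of \<beta> w2 w1 k l l w3]
    by (simp add: u_def n_def mult_2 add.assoc)
  moreover have "u (k + l) \<noteq> u k"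
    using word_val_pumped_diff_neq_0[OF \<open>\<beta> \<noteq> 0\<close>] \<open>(\<beta> ^ n) ^ l \<noteq> 1\<close> assms(9)
    by (simp add: u_def n_def)
  moreover have "(u (k + 2 * l) - u (k + l)) / (u (k + l) - u k) \<in> \<real>"
    using collinear_3_diff_ratio_Reals[OF assms(11)] by (simp add: u_def)
  ultimately have "\<beta> ^ (n * l) \<in> \<real>"
    by (simp add: power_mult)
  then have "\<beta> ^ (n * l) \<in> \<int>"
    using gauss_int_power[OF assms(1)] by (rule gauss_int_Reals_imp_Ints[rotated])
  moreover have "n * l \<ge> 1"
    using \<open>n \<ge> 1\<close> \<open>l \<ge> 1\<close> by simp
  ultimately show ?thesis by blast
qed

end
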